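(* Let $G$ be an étale locally compact Hausdorff groupoid with unit space $G^{(0)}$, and let $\Sigma \rightarrow G$ be a twist over $G$. Then for each $f \in \ell^2(\Sigma; G)$ the function on $G^{(0)}$ defined by $$x \mapsto \max \left\{ \sum_{\gamma \in G_x} |f(\gamma)|^2,\ \sum_{\gamma \in G^x} |f(\gamma)|^2\right\}^{1/2}$$ is continuous.
   Context: A twist $\Sigma\rightarrow G$ is a locally trivial central extension $\mathbb{T}\times G^{(0)} \to \Sigma \to G$ of groupoids. It determines a complex line bundle $L=(\mathbb{C}\times\Sigma)/\sim$ over $G$, where $(z_1,\sigma_1)\sim(z_2,\sigma_2)$ iff $(z_1,\sigma_1)=(\overline{\lambda}z_2,\lambda\cdot\sigma_2)$ for some $\lambda\in\mathbb{T}$; the absolute value $|[z,\sigma]|=|z|$ is well defined. $C_c(\Sigma;G)$ denotes the continuous compactly supported sections $G\to L$. For $x\in G^{(0)}$, $G_x=\{\gamma: s(\gamma)=x\}$ and $G^x=\{\gamma: r(\gamma)=x\}$. The $2$-norm on $C_c(\Sigma;G)$ is $\|f\|_2=\sup_{x\in G^{(0)}}\max\{\sum_{\gamma\in G_x}|f(\gamma)|^2,\sum_{\gamma\in G^x}|f(\gamma)|^2\}^{1/2}$, and $\ell^2(\Sigma;G)$ is the completion of $C_c(\Sigma;G)$ in $\|\cdot\|_2$, realized as a space of continuous sections of $L$ (the $2$-norm dominates the sup-norm). *)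

theory Defs
  imports "HOL-Analysis.Analysis" "HOL-Library.Extended_Nonnegative_Real"
begin

definition groupoid ::
  "'g set \<Rightarrow> ('g \<Rightarrow> 'g) \<Rightarrow> ('g \<Rightarrow> 'g) \<Rightarrow> ('g \<Rightarrow> 'g \<Rightarrow> 'g) \<Rightarrow> ('g \<Rightarrow> 'g) \<Rightarrow> bool" where
  "groupoid G r s m i \<longleftrightarrow>
     (\<forall>a\<in>G. r a \<in> G \<and> s a \<in> G \<and> i a \<in> G) \<and>
     (\<forall>a\<in>G. r (r a) = r a \<and> s (r a) = r a \<and> r (s a) = s a \<and> s (s a) = s a) \<and>
     (\<forall>a\<in>G. \<forall>b\<in>G. s a = r b \<longrightarrow> m a b \<in> G \<and> r (m a b) = r a \<and> s (m a b) = s b) \<and>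
     (\<forall>a\<in>G. \<forall>b\<in>G. \<forall>c\<in>G. s a = r b \<longrightarrow> s b = r c \<longrightarrow> m (m a b) c = m a (m b c)) \<and>
     (\<forall>a\<in>G. m (r a) a = a \<and> m a (s a) = a) \<and>
     (\<forall>a\<in>G. r (i a) = s a \<and> s (i a) = r a \<and> m a (i a) = r a \<and> m (i a) a = s a)"

definition units :: "'g set \<Rightarrow> ('g \<Rightarrow> 'g) \<Rightarrow> 'g set" where
  "units G r = r ` G"

definition composable :: "'g set \<Rightarrow> ('g \<Rightarrow> 'g) \<Rightarrow> ('g \<Rightarrow> 'g) \<Rightarrow> ('g \<times> 'g) set" where
  "composable G r s = {(a, b). a \<in> G \<and> b \<in> G \<and> s a = r b}"

definition topological_groupoid ::
  "'g topology \<Rightarrow> ('g \<Rightarrow> 'g) \<Rightarrow> ('g \<Rightarrow> 'g) \<Rightarrow> ('g \<Rightarrow> 'g \<Rightarrow> 'g) \<Rightarrow> ('g \<Rightarrow> 'g) \<Rightarrow> bool" where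
  "topological_groupoid T r s m i \<longleftrightarrow>
     groupoid (topspace T) r s m i \<and>
     continuous_map (subtopology (prod_topology T T) (composable (topspace T) r s)) T
        (\<lambda>(a, b). m a b) \<and>
     continuous_map T T i \<and> continuous_map T T r \<and> continuous_map T T s"

definition etale_groupoid ::
  "'g topology \<Rightarrow> ('g \<Rightarrow> 'g) \<Rightarrow> ('g \<Rightarrow> 'g) \<Rightarrow> ('g \<Rightarrow> 'g \<Rightarrow> 'g) \<Rightarrow> ('g \<Rightarrow> 'g) \<Rightarrow> bool" where
  "etale_groupoid T r s m i \<longleftrightarrow>
     topological_groupoid T r s m i \<and>
     (\<forall>g\<in>topspace T. \<exists>U. openin T U \<and> g \<in> U \<and> openin T (r ` U) \<and>
        homeomorphic_map (subtopology T U) (subtopology T (r ` U)) r)"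

definition circle :: "complex set" where
  "circle = sphere 0 1"

definition twist ::
  "'g topology \<Rightarrow> ('g \<Rightarrow> 'g) \<Rightarrow> ('g \<Rightarrow> 'g) \<Rightarrow> ('g \<Rightarrow> 'g \<Rightarrow> 'g) \<Rightarrow> ('g \<Rightarrow> 'g) \<Rightarrow>
   's topology \<Rightarrow> ('s \<Rightarrow> 's) \<Rightarrow> ('s \<Rightarrow> 's) \<Rightarrow> ('s \<Rightarrow> 's \<Rightarrow> 's) \<Rightarrow> ('s \<Rightarrow> 's) \<Rightarrow>
   (complex \<times> 'g \<Rightarrow> 's) \<Rightarrow> ('s \<Rightarrow> 'g) \<Rightarrow> bool" where
  "twist TG r s m i TS rS sS mS iS \<iota> \<pi> \<longleftrightarrow>
     (let G = topspace TG; G0 = units G r; S = topspace TS in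
     topological_groupoid TS rS sS mS iS \<and>
     \<comment> \<open>pi: continuous surjective groupoid homomorphism\<close>
     continuous_map TS TG \<pi> \<and> \<pi> ` S = G \<and>
     (\<forall>\<sigma>\<in>S. \<pi> (rS \<sigma>) = r (\<pi> \<sigma>) \<and> \<pi> (sS \<sigma>) = s (\<pi> \<sigma>)) \<and>
     (\<forall>a\<in>S. \<forall>b\<in>S. sS a = rS b \<longrightarrow> \<pi> (mS a b) = m (\<pi> a) (\<pi> b)) \<and>
     \<comment> \<open>pi is a bijection on unit spaces\<close>
     inj_on \<pi> (units S rS) \<and>
     \<comment> \<open>iota: injective groupoid homomorphism from the trivial bundle circle x G0\<close>
     (\<forall>z\<in>circle. \<forall>x\<in>G0. \<iota> (z, x) \<in> S \<and> \<pi> (\<iota> (z, x)) = x \<and>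
         rS (\<iota> (z, x)) = \<iota> (1, x) \<and> sS (\<iota> (z, x)) = \<iota> (1, x)) \<and>
     (\<forall>z\<in>circle. \<forall>w\<in>circle. \<forall>x\<in>G0. mS (\<iota> (z, x)) (\<iota> (w, x)) = \<iota> (z * w, x)) \<and>
     inj_on \<iota> (circle \<times> G0) \<and>
     \<comment> \<open>exactness, with iota a homeomorphism onto pi^{-1}(G0)\<close>
     \<iota> ` (circle \<times> G0) = {\<sigma>\<in>S. \<pi> \<sigma> \<in> G0} \<and>
     homeomorphic_map (prod_topology (subtopology euclidean circle) (subtopology TG G0))
        (subtopology TS {\<sigma>\<in>S. \<pi> \<sigma> \<in> G0}) \<iota> \<and>
     \<comment> \<open>centrality\<close>
     (\<forall>\<sigma>\<in>S. \<forall>z\<in>circle. mS (\<iota> (z, r (\<pi> \<sigma>))) \<sigma> = mS \<sigma> (\<iota> (z, s (\<pi> \<sigma>)))) \<and>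
     \<comment> \<open>local triviality\<close>
     (\<forall>g\<in>G. \<exists>U P. openin TG U \<and> g \<in> U \<and>
        continuous_map (subtopology TG U) TS P \<and>
        (\<forall>a\<in>U. P a \<in> S \<and> \<pi> (P a) = a) \<and>
        homeomorphic_map (prod_topology (subtopology euclidean circle) (subtopology TG U))
           (subtopology TS {\<sigma>\<in>S. \<pi> \<sigma> \<in> U}) (\<lambda>(z, a). mS (\<iota> (z, r a)) (P a))))"

definition tact :: "('g \<Rightarrow> 'g) \<Rightarrow> ('s \<Rightarrow> 's \<Rightarrow> 's) \<Rightarrow> (complex \<times> 'g \<Rightarrow> 's) \<Rightarrow> ('s \<Rightarrow> 'g) \<Rightarrow>
   complex \<Rightarrow> 's \<Rightarrow> 's" where
  "tact r mS \<iota> \<pi> z \<sigma> = mS (\<iota> (z, r (\<pi> \<sigma>))) \<sigma>"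

section \<open>The line bundle L = (C x Sigma)/~\<close>

definition Lrel :: "'s set \<Rightarrow> ('g \<Rightarrow> 'g) \<Rightarrow> ('s \<Rightarrow> 's \<Rightarrow> 's) \<Rightarrow> (complex \<times> 'g \<Rightarrow> 's) \<Rightarrow>
   ('s \<Rightarrow> 'g) \<Rightarrow> ((complex \<times> 's) \<times> (complex \<times> 's)) set" where
  "Lrel S r mS \<iota> \<pi> = {((z1, \<sigma>1), (z2, \<sigma>2)). \<sigma>1 \<in> S \<and> \<sigma>2 \<in> S \<and>
      (\<exists>w\<in>circle. z1 = cnj w * z2 \<and> \<sigma>1 = tact r mS \<iota> \<pi> w \<sigma>2)}"

definition quot_topology :: "'a topology \<Rightarrow> ('a \<times> 'a) set \<Rightarrow> 'a set topology" where
  "quot_topology X R = topology (\<lambda>U. U \<subseteq> topspace X // R \<and> openin X (\<Union>U))"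

definition Ltop :: "'s topology \<Rightarrow> ('g \<Rightarrow> 'g) \<Rightarrow> ('s \<Rightarrow> 's \<Rightarrow> 's) \<Rightarrow> (complex \<times> 'g \<Rightarrow> 's) \<Rightarrow>
   ('s \<Rightarrow> 'g) \<Rightarrow> (complex \<times> 's) set topology" where
  "Ltop TS r mS \<iota> \<pi> = quot_topology (prod_topology euclidean TS) (Lrel (topspace TS) r mS \<iota> \<pi>)"

text \<open>Absolute value |[z,sigma]| = |z|, and the distance |c1 - c2| within a fibre
 (computed with representatives sharing the same sigma).\<close>
definition Labs :: "(complex \<times> 's) set \<Rightarrow> real" where
  "Labs c = cmod (fst (SOME p. p \<in> c))"

definition Ldist :: "(complex \<times> 's) set \<Rightarrow> (complex \<times> 's) set \<Rightarrow> real" where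
  "Ldist c1 c2 = (SOME d. \<exists>\<sigma> z1 z2. (z1, \<sigma>) \<in> c1 \<and> (z2, \<sigma>) \<in> c2 \<and> d = cmod (z1 - z2))"

definition cont_section :: "'g topology \<Rightarrow> 's topology \<Rightarrow> ('g \<Rightarrow> 'g) \<Rightarrow> ('s \<Rightarrow> 's \<Rightarrow> 's) \<Rightarrow>
   (complex \<times> 'g \<Rightarrow> 's) \<Rightarrow> ('s \<Rightarrow> 'g) \<Rightarrow> ('g \<Rightarrow> (complex \<times> 's) set) \<Rightarrow> bool" where
  "cont_section TG TS r mS \<iota> \<pi> f \<longleftrightarrow>
     continuous_map TG (Ltop TS r mS \<iota> \<pi>) f \<and>
     (\<forall>\<gamma>\<in>topspace TG. \<forall>p\<in>f \<gamma>. \<pi> (snd p) = \<gamma>)"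

definition Cc :: "'g topology \<Rightarrow> 's topology \<Rightarrow> ('g \<Rightarrow> 'g) \<Rightarrow> ('s \<Rightarrow> 's \<Rightarrow> 's) \<Rightarrow>
   (complex \<times> 'g \<Rightarrow> 's) \<Rightarrow> ('s \<Rightarrow> 'g) \<Rightarrow> ('g \<Rightarrow> (complex \<times> 's) set) set" where
  "Cc TG TS r mS \<iota> \<pi> = {f. cont_section TG TS r mS \<iota> \<pi> f \<and>
      compactin TG (TG closure_of {\<gamma>\<in>topspace TG. Labs (f \<gamma>) \<noteq> 0})}"

definition l2sq :: "'g set \<Rightarrow> ('g \<Rightarrow> 'g) \<Rightarrow> ('g \<Rightarrow> 'g) \<Rightarrow> ('g \<Rightarrow> real) \<Rightarrow> ennreal" where
  "l2sq G r s a = (SUP x\<in>units G r.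
      max (\<Sum>\<^sub>\<infinity>\<gamma>\<in>{\<gamma>\<in>G. s \<gamma> = x}. ennreal ((a \<gamma>)\<^sup>2))
          (\<Sum>\<^sub>\<infinity>\<gamma>\<in>{\<gamma>\<in>G. r \<gamma> = x}. ennreal ((a \<gamma>)\<^sup>2)))"

text \<open>ell^2(Sigma;G): the completion of C_c(Sigma;G) in the 2-norm, realized as the
 continuous sections that are 2-norm limits of sequences in C_c(Sigma;G).\<close>
definition ell2 :: "'g topology \<Rightarrow> 's topology \<Rightarrow> ('g \<Rightarrow> 'g) \<Rightarrow> ('g \<Rightarrow> 'g) \<Rightarrow> ('s \<Rightarrow> 's \<Rightarrow> 's) \<Rightarrow>
   (complex \<times> 'g \<Rightarrow> 's) \<Rightarrow> ('s \<Rightarrow> 'g) \<Rightarrow> ('g \<Rightarrow> (complex \<times> 's) set) set" where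
  "ell2 TG TS r s mS \<iota> \<pi> = {f. cont_section TG TS r mS \<iota> \<pi> f \<and>
      (\<exists>fn. (\<forall>n. fn n \<in> Cc TG TS r mS \<iota> \<pi>) \<and>
         ((\<lambda>n. l2sq (topspace TG) r s (\<lambda>\<gamma>. Ldist (f \<gamma>) (fn n \<gamma>))) \<longlongrightarrow> 0) sequentially)}"

end

(* For a compactly supported section g, each fibre of the local homeomorphisms r and s meets the
   compact support of g in finitely many points, and near any unit these points move along finitely
   many continuous local sections.  So the fibre sums of |g|^2 over G_x and G^x are locally finite
   sums of continuous functions, and x |-> max {...}^(1/2) is continuous for g in C_c(Sigma;G).
   By the triangle inequality in l^2 of each fibre, this function moves by at most the 2-norm of
   f - g when g is replaced by f.  For f in l^2(Sigma;G) it is therefore a uniform limit of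
   continuous functions. *)

theory Submission
  imports Defs
begin

lemma continuous_map_real_uniform_limit:
  fixes f :: "'a \<Rightarrow> real" and g :: "nat \<Rightarrow> 'a \<Rightarrow> real"
  assumes cont: "\<And>n. continuous_map X euclidean (g n)"
    and bound: "\<forall>\<^sub>F n in sequentially. \<forall>x\<in>topspace X. \<bar>g n x - f x\<bar> \<le> c n"
    and c: "c \<longlonglongrightarrow> 0"
  shows "continuous_map X euclidean f"
proof -
  have "continuous_map X Met_TC.mtopology f"
  proof (rule Met_TC.continuous_map_uniform_limit_alt[where F = sequentially and f = g])
    fix \<epsilon> :: real
    assume "0 < \<epsilon>"
    then have "\<forall>\<^sub>F n in sequentially. c n < \<epsilon>"
      using c by (auto dest: order_tendstoD(2))
    with bound show "\<forall>\<^sub>F n in sequentially. \<forall>x\<in>topspace X. dist (g n x) (f x) < \<epsilon>"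
      by eventually_elim (fastforce simp: dist_real_def)
  qed (use cont in auto)
  then show ?thesis
    by simp
qed

lemma continuous_map_locally:
  assumes "\<And>x. x \<in> topspace X \<Longrightarrow> \<exists>W. openin X W \<and> x \<in> W \<and> continuous_map (subtopology X W) Y f"
  shows "continuous_map X Y f"
proof -
  obtain W where W: "\<And>x. x \<in> topspace X \<Longrightarrow> openin X (W x) \<and> x \<in> W x \<and> continuous_map (subtopology X (W x)) Y f"
    using assms by metis
  show ?thesis
    by (rule pasting_lemma[where I = "topspace X" and T = W and f = "\<lambda>_. f"]) (use W in auto)
qed

lemma L2_set_le_sqrt_of_infsum_square_le:
  fixes b :: "'a \<Rightarrow> real"
  assumes "finite E" "E \<subseteq> A" "(\<Sum>\<^sub>\<infinity>x\<in>A. ennreal ((b x)\<^sup>2)) \<le> ennreal B" "0 \<le> B"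
  shows "L2_set b E \<le> sqrt B"
proof -
  have "ennreal (\<Sum>x\<in>E. (b x)\<^sup>2) = (\<Sum>x\<in>E. ennreal ((b x)\<^sup>2))"
    by (simp add: sum_ennreal)
  also have "\<dots> \<le> (SUP E\<in>{E. finite E \<and> E \<subseteq> A}. \<Sum>x\<in>E. ennreal ((b x)\<^sup>2))"
    by (rule SUP_upper) (use assms in simp)
  also have "\<dots> = (\<Sum>\<^sub>\<infinity>x\<in>A. ennreal ((b x)\<^sup>2))"
    by (simp add: nonneg_infsum_complete)
  also have "\<dots> \<le> ennreal B"
    by (rule assms(3))
  finally have "(\<Sum>x\<in>E. (b x)\<^sup>2) \<le> B"
    using assms(4) by simp
  then show ?thesis
    by (simp add: L2_set_def)
qed

lemma infsum_square_le_add: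
  fixes a b d :: "'a \<Rightarrow> real"
  assumes a: "\<And>x. x \<in> A \<Longrightarrow> 0 \<le> a x \<and> a x \<le> b x + d x"
    and B: "(\<Sum>\<^sub>\<infinity>x\<in>A. ennreal ((b x)\<^sup>2)) \<le> ennreal B" "0 \<le> B"
    and D: "(\<Sum>\<^sub>\<infinity>x\<in>A. ennreal ((d x)\<^sup>2)) \<le> ennreal D" "0 \<le> D"
  shows "(\<Sum>\<^sub>\<infinity>x\<in>A. ennreal ((a x)\<^sup>2)) \<le> ennreal ((sqrt B + sqrt D)\<^sup>2)"
proof -
  have finite_sums: "(\<Sum>x\<in>E. ennreal ((a x)\<^sup>2)) \<le> ennreal ((sqrt B + sqrt D)\<^sup>2)"
    if E: "finite E" "E \<subseteq> A" for E
  proof -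
    have "L2_set a E \<le> L2_set (\<lambda>x. b x + d x) E"
      by (rule L2_set_mono) (use E a in auto)
    also have "\<dots> \<le> L2_set b E + L2_set d E"
      by (rule L2_set_triangle_ineq)
    also have "\<dots> \<le> sqrt B + sqrt D"
      using L2_set_le_sqrt_of_infsum_square_le[OF E B] L2_set_le_sqrt_of_infsum_square_le[OF E D]
      by linarith
    finally have "(L2_set a E)\<^sup>2 \<le> (sqrt B + sqrt D)\<^sup>2"
      by (rule power_mono) simp
    then show ?thesis
      by (simp add: L2_set_def sum_nonneg sum_ennreal)
  qed
  have "(\<Sum>\<^sub>\<infinity>x\<in>A. ennreal ((a x)\<^sup>2)) = (SUP E\<in>{E. finite E \<and> E \<subseteq> A}. \<Sum>x\<in>E. ennreal ((a x)\<^sup>2))"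
    by (rule nonneg_infsum_complete) simp
  also have "\<dots> \<le> ennreal ((sqrt B + sqrt D)\<^sup>2)"
    by (rule SUP_least) (use finite_sums in blast)
  finally show ?thesis .
qed

lemma sqrt_infsum_square_diff_le:
  fixes a b d :: "'a \<Rightarrow> real"
  assumes nonneg: "\<And>x. x \<in> A \<Longrightarrow> 0 \<le> a x \<and> 0 \<le> b x"
    and diff: "\<And>x. x \<in> A \<Longrightarrow> \<bar>a x - b x\<bar> \<le> d x"
    and b_finite: "(\<Sum>\<^sub>\<infinity>x\<in>A. ennreal ((b x)\<^sup>2)) < top"
    and D: "(\<Sum>\<^sub>\<infinity>x\<in>A. ennreal ((d x)\<^sup>2)) \<le> ennreal D" "0 \<le> D"
  shows "(\<Sum>\<^sub>\<infinity>x\<in>A. ennreal ((a x)\<^sup>2)) < top"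
    and "\<bar>sqrt (enn2real (\<Sum>\<^sub>\<infinity>x\<in>A. ennreal ((a x)\<^sup>2))) - sqrt (enn2real (\<Sum>\<^sub>\<infinity>x\<in>A. ennreal ((b x)\<^sup>2)))\<bar>
           \<le> sqrt D"
proof -
  define Na Nb where "Na = (\<Sum>\<^sub>\<infinity>x\<in>A. ennreal ((a x)\<^sup>2))" and "Nb = (\<Sum>\<^sub>\<infinity>x\<in>A. ennreal ((b x)\<^sup>2))"
  have sqrt_le: "sqrt (enn2real N) \<le> u" if "N \<le> ennreal (u\<^sup>2)" "0 \<le> u" for N u
    using that real_sqrt_le_mono[OF enn2real_leI[OF _ that(1)]] by simp
  have ab: "0 \<le> a x \<and> a x \<le> b x + d x" "0 \<le> b x \<and> b x \<le> a x + d x" if "x \<in> A" for x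
    using nonneg[OF that] diff[OF that] by auto
  have Nb: "Nb \<le> ennreal (enn2real Nb)"
    using b_finite unfolding Nb_def by (simp add: ennreal_enn2real_if)
  have Na_le: "Na \<le> ennreal ((sqrt (enn2real Nb) + sqrt D)\<^sup>2)"
    unfolding Na_def Nb_def by (rule infsum_square_le_add[OF ab(1) Nb[unfolded Nb_def] enn2real_nonneg D])
  then show "Na < top"
    using ennreal_less_top by (rule le_less_trans)
  then have Na: "Na \<le> ennreal (enn2real Na)"
    by (simp add: ennreal_enn2real_if)
  have Nb_le: "Nb \<le> ennreal ((sqrt (enn2real Na) + sqrt D)\<^sup>2)"
    unfolding Na_def Nb_def by (rule infsum_square_le_add[OF ab(2) Na[unfolded Na_def] enn2real_nonneg D])
  show "\<bar>sqrt (enn2real Na) - sqrt (enn2real Nb)\<bar> \<le> sqrt D"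
    using sqrt_le[OF Na_le] sqrt_le[OF Nb_le] by (simp add: D(2) abs_le_iff)
qed

lemma abs_max_diff_le:
  fixes x1 x2 y1 y2 e :: "'a :: linordered_idom"
  assumes "\<bar>x1 - x2\<bar> \<le> e" "\<bar>y1 - y2\<bar> \<le> e"
  shows "\<bar>max x1 y1 - max x2 y2\<bar> \<le> e"
  using assms by (auto simp: max_def abs_le_iff)

section \<open>Local homeomorphisms and sums over fibres\<close>

definition local_homeomorphism_map :: "'a topology \<Rightarrow> 'b topology \<Rightarrow> ('a \<Rightarrow> 'b) \<Rightarrow> bool" where
  "local_homeomorphism_map X Y p \<longleftrightarrow>
     (\<forall>x\<in>topspace X. \<exists>U. openin X U \<and> x \<in> U \<and> openin Y (p ` U) \<and>
        homeomorphic_map (subtopology X U) (subtopology Y (p ` U)) p)"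

lemma local_homeomorphism_map_local_inverse:
  assumes "local_homeomorphism_map X Y p" and "x \<in> topspace X"
  obtains U where "openin X U" "x \<in> U" "inj_on p U"
    "\<And>V. openin X V \<Longrightarrow> V \<subseteq> U \<Longrightarrow> openin Y (p ` V)"
    "continuous_map (subtopology Y (p ` U)) X (inv_into U p)"
proof -
  obtain U where U: "openin X U" "x \<in> U" "openin Y (p ` U)"
    and hom: "homeomorphic_map (subtopology X U) (subtopology Y (p ` U)) p"
    using assms unfolding local_homeomorphism_map_def by blast
  have UX: "topspace X \<inter> U = U" and UY: "topspace Y \<inter> p ` U = p ` U"
    using U(1,3) by (auto dest: openin_subset)
  have inj: "inj_on p U"
    using hom UX by (simp add: homeomorphic_eq_everything_map)
  obtain q where q: "homeomorphic_maps (subtopology X U) (subtopology Y (p ` U)) p q"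
    using hom homeomorphic_map_maps by blast
  show thesis
  proof
    show "inj_on p U"
      by (rule inj)
    show "openin Y (p ` V)" if "openin X V" "V \<subseteq> U" for V
    proof -
      have "openin (subtopology X U) V"
        unfolding openin_subtopology using that by (intro exI[of _ V]) blast
      then have "openin (subtopology Y (p ` U)) (p ` V)"
        using homeomorphic_map_openness[OF hom] that(2) UX by auto
      then show ?thesis
        using U(3) by (rule openin_trans_full)
    qed
    have "continuous_map (subtopology Y (p ` U)) X q"
      using q by (auto simp: homeomorphic_maps_def intro: continuous_map_into_fulltopology)
    moreover have "q y = inv_into U p y" if "y \<in> topspace (subtopology Y (p ` U))" for y
      using q that UX UY inj by (auto simp: homeomorphic_maps_def)
    ultimately show "continuous_map (subtopology Y (p ` U)) X (inv_into U p)"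
      by (rule continuous_map_eq)
  qed (use U in auto)
qed

lemma local_homeomorphism_map_local_inverses:
  assumes "local_homeomorphism_map X Y p"
  obtains U where "\<And>x. x \<in> topspace X \<Longrightarrow> openin X (U x) \<and> x \<in> U x \<and> inj_on p (U x)"
    "\<And>x V. x \<in> topspace X \<Longrightarrow> openin X V \<Longrightarrow> V \<subseteq> U x \<Longrightarrow> openin Y (p ` V)"
    "\<And>x. x \<in> topspace X \<Longrightarrow> continuous_map (subtopology Y (p ` U x)) X (inv_into (U x) p)"
proof -
  have "\<forall>x\<in>topspace X. \<exists>U. (openin X U \<and> x \<in> U \<and> inj_on p U) \<and>
      (\<forall>V. openin X V \<longrightarrow> V \<subseteq> U \<longrightarrow> openin Y (p ` V)) \<and>
      continuous_map (subtopology Y (p ` U)) X (inv_into U p)"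
    using local_homeomorphism_map_local_inverse[OF assms] by metis
  then show thesis
    using that by metis
qed

lemma local_homeomorphism_map_compose_homeomorphism:
  assumes h: "homeomorphic_map X X h" and p: "local_homeomorphism_map X Y p"
  shows "local_homeomorphism_map X Y (p \<circ> h)"
  unfolding local_homeomorphism_map_def
proof
  fix x assume x: "x \<in> topspace X"
  have hX: "h ` topspace X = topspace X"
    using h by (simp add: homeomorphic_imp_surjective_map)
  obtain U where U: "openin X U" "h x \<in> U" "openin Y (p ` U)"
    and hom: "homeomorphic_map (subtopology X U) (subtopology Y (p ` U)) p"
    using p hX x unfolding local_homeomorphism_map_def by blast
  define V where "V = {x \<in> topspace X. h x \<in> U}"
  have hV: "h ` V = U"
    using hX U(1) openin_subset unfolding V_def by fastforce
  then have img: "(p \<circ> h) ` V = p ` U"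
    by (metis image_comp)
  have "homeomorphic_map (subtopology X V) (subtopology X U) h"
    by (rule homeomorphic_map_subtopologies[OF h]) (use hV hX in \<open>auto simp: V_def\<close>)
  then have "homeomorphic_map (subtopology X V) (subtopology Y ((p \<circ> h) ` V)) (p \<circ> h)"
    unfolding img using hom by (rule homeomorphic_map_compose)
  moreover have "openin X V"
    unfolding V_def using homeomorphic_imp_continuous_map[OF h] U(1) by (rule openin_continuous_map_preimage)
  ultimately show "\<exists>V. openin X V \<and> x \<in> V \<and> openin Y ((p \<circ> h) ` V) \<and>
      homeomorphic_map (subtopology X V) (subtopology Y ((p \<circ> h) ` V)) (p \<circ> h)"
    using x U(2,3) img by (auto simp: V_def)
qed

lemma local_homeomorphism_map_eq:
  assumes "local_homeomorphism_map X Y p" "\<And>x. x \<in> topspace X \<Longrightarrow> p x = q x"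
  shows "local_homeomorphism_map X Y q"
proof -
  have "p ` U = q ` U" if "openin X U" for U
    using assms(2) openin_subset[OF that] by (auto intro!: image_cong)
  moreover have "homeomorphic_map (subtopology X U) Z q" if "homeomorphic_map (subtopology X U) Z p" for U Z
    using that assms(2) by (rule homeomorphic_map_eq) simp
  ultimately show ?thesis
    using assms(1) unfolding local_homeomorphism_map_def by metis
qed

lemma finite_fibre_Int_compactin:
  assumes "local_homeomorphism_map X Y p" "compactin X K"
  shows "finite {x \<in> K. p x = y}"
proof -
  obtain U where U: "\<And>x. x \<in> topspace X \<Longrightarrow> openin X (U x) \<and> x \<in> U x \<and> inj_on p (U x)"
    using local_homeomorphism_map_local_inverses[OF assms(1)] by metis
  have K: "K \<subseteq> topspace X"
    using assms(2) by (rule compactin_subset_topspace)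
  obtain \<F> where \<F>: "finite \<F>" "\<F> \<subseteq> U ` K" "K \<subseteq> \<Union>\<F>"
    using assms(2) U K unfolding compactin_def by (smt (verit, ccfv_SIG) UN_I image_iff subset_iff)
  have "finite (p -` {y} \<inter> V)" if "V \<in> \<F>" for V
    using that \<F>(2) U K by (force intro: finite_vimage_IntI)
  then have "finite (\<Union>V\<in>\<F>. p -` {y} \<inter> V)"
    using \<F>(1) by blast
  moreover have "{x \<in> K. p x = y} \<subseteq> (\<Union>V\<in>\<F>. p -` {y} \<inter> V)"
    using \<F>(3) by blast
  ultimately show ?thesis
    by (rule finite_subset[rotated])
qed

lemma Hausdorff_space_finite_separation:
  assumes "Hausdorff_space X" "finite F" "F \<subseteq> topspace X"
  obtains V where "\<And>x. x \<in> F \<Longrightarrow> openin X (V x) \<and> x \<in> V x"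
    "\<And>x x'. x \<in> F \<Longrightarrow> x' \<in> F \<Longrightarrow> x \<noteq> x' \<Longrightarrow> disjnt (V x) (V x')"
proof -
  obtain A B where AB: "\<And>x x'. x \<in> topspace X \<Longrightarrow> x' \<in> topspace X \<Longrightarrow> x \<noteq> x' \<Longrightarrow>
      openin X (A x x') \<and> openin X (B x x') \<and> x \<in> A x x' \<and> x' \<in> B x x' \<and> disjnt (A x x') (B x x')"
    using assms(1) unfolding Hausdorff_space_def by metis
  define V where "V x = (\<Inter>x'\<in>F - {x}. A x x' \<inter> B x' x) \<inter> topspace X" for x
  show thesis
  proof
    show "openin X (V x) \<and> x \<in> V x" if "x \<in> F" for x
    proof -
      have "openin X (A x x' \<inter> B x' x) \<and> x \<in> A x x' \<inter> B x' x" if "x' \<in> F - {x}" for x'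
        using AB[of x x'] AB[of x' x] that \<open>x \<in> F\<close> assms(3) by auto
      then show ?thesis
        using that assms(2,3) unfolding V_def by (intro conjI openin_INT) auto
    qed
    show "disjnt (V x) (V x')" if "x \<in> F" "x' \<in> F" "x \<noteq> x'" for x x'
    proof -
      have "V x \<subseteq> A x x'" "V x' \<subseteq> B x x'"
        using that unfolding V_def by blast+
      then show ?thesis
        using AB[of x x'] that assms(3) by (meson disjnt_subset1 disjnt_subset2 subsetD)
    qed
  qed
qed

lemma compactin_fibres_eventually_subset:
  assumes Y: "Hausdorff_space Y" and p: "continuous_map X Y p" and K: "compactin X K"
    and V: "openin X V" "{x \<in> K. p x = y0} \<subseteq> V" and y0: "y0 \<in> topspace Y"
  obtains W where "openin Y W" "y0 \<in> W" "\<And>y. y \<in> W \<Longrightarrow> {x \<in> K. p x = y} \<subseteq> V"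
proof
  have "K - V = (topspace X - V) \<inter> K"
    using compactin_subset_topspace[OF K] by blast
  then have "compactin X (K - V)"
    using K V(1) by (simp add: closed_Int_compactin closedin_diff)
  then have "closedin Y (p ` (K - V))"
    using Y p by (blast intro: compactin_imp_closedin image_compactin)
  then show "openin Y (topspace Y - p ` (K - V))"
    by (simp add: openin_diff)
  show "y0 \<in> topspace Y - p ` (K - V)"
    using y0 V(2) by blast
  show "{x \<in> K. p x = y} \<subseteq> V" if "y \<in> topspace Y - p ` (K - V)" for y
    using that by blast
qed

lemma compact_fibres_local_sections:
  assumes X: "Hausdorff_space X" and Y: "Hausdorff_space Y"
    and p: "continuous_map X Y p" "local_homeomorphism_map X Y p"
    and K: "compactin X K" and y0: "y0 \<in> topspace Y"
  obtains W \<sigma> where "openin Y W" "y0 \<in> W"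
    "\<And>x. x \<in> {x \<in> K. p x = y0} \<Longrightarrow> continuous_map (subtopology Y W) X (\<sigma> x)"
    "\<And>x y. x \<in> {x \<in> K. p x = y0} \<Longrightarrow> y \<in> W \<Longrightarrow> p (\<sigma> x y) = y"
    "\<And>y. y \<in> W \<Longrightarrow> inj_on (\<lambda>x. \<sigma> x y) {x \<in> K. p x = y0}"
    "\<And>y. y \<in> W \<Longrightarrow> {x \<in> K. p x = y} \<subseteq> (\<lambda>x. \<sigma> x y) ` {x \<in> K. p x = y0}"
proof -
  define F where "F = {x \<in> K. p x = y0}"
  have KX: "K \<subseteq> topspace X"
    using K by (rule compactin_subset_topspace)
  have F: "finite F" "F \<subseteq> topspace X"
    unfolding F_def using finite_fibre_Int_compactin[OF p(2) K] KX by auto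
  obtain U where U: "\<And>x. x \<in> topspace X \<Longrightarrow> openin X (U x) \<and> x \<in> U x \<and> inj_on p (U x)"
    and U_open_map: "\<And>x V. x \<in> topspace X \<Longrightarrow> openin X V \<Longrightarrow> V \<subseteq> U x \<Longrightarrow> openin Y (p ` V)"
    and U_inverse: "\<And>x. x \<in> topspace X \<Longrightarrow> continuous_map (subtopology Y (p ` U x)) X (inv_into (U x) p)"
    using local_homeomorphism_map_local_inverses[OF p(2)] by metis
  obtain V0 where V0: "\<And>x. x \<in> F \<Longrightarrow> openin X (V0 x) \<and> x \<in> V0 x"
    "\<And>x x'. x \<in> F \<Longrightarrow> x' \<in> F \<Longrightarrow> x \<noteq> x' \<Longrightarrow> disjnt (V0 x) (V0 x')"
    using Hausdorff_space_finite_separation[OF X F] by blast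
  define V where "V x = U x \<inter> V0 x" for x
  have V: "openin X (V x)" "x \<in> V x" "V x \<subseteq> U x" if "x \<in> F" for x
    using U[of x] V0(1)[of x] that F(2) unfolding V_def by (auto intro: openin_Int)
  obtain W0 where W0: "openin Y W0" "y0 \<in> W0" "\<And>y. y \<in> W0 \<Longrightarrow> {x \<in> K. p x = y} \<subseteq> (\<Union>x\<in>F. V x)"
    using compactin_fibres_eventually_subset[OF Y p(1) K _ _ y0, of "\<Union>x\<in>F. V x"] V
    unfolding F_def by blast
  define W where "W = W0 \<inter> (\<Inter>x\<in>F. p ` V x)"
  define \<sigma> where "\<sigma> x = inv_into (U x) p" for x
  have \<sigma>: "\<sigma> x y \<in> V x" "p (\<sigma> x y) = y" if x: "x \<in> F" and y: "y \<in> W" for x y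
  proof -
    obtain v where "v \<in> V x" "y = p v"
      using x y unfolding W_def by blast
    moreover have "inj_on p (U x)"
      using U F(2) x by blast
    ultimately show "\<sigma> x y \<in> V x" "p (\<sigma> x y) = y"
      using V(3)[OF x] unfolding \<sigma>_def by (auto simp: inv_into_f_f)
  qed
  show thesis
  proof (rule that[unfolded F_def[symmetric]])
    have "openin Y (p ` V x)" if "x \<in> F" for x
      using U_open_map[of x "V x"] V[OF that] F(2) that by blast
    then show "openin Y W"
      unfolding W_def using W0(1) F(1) by (intro openin_Int_Inter) auto
    show "y0 \<in> W"
      unfolding W_def using W0(2) V(2) unfolding F_def by auto
    show "continuous_map (subtopology Y W) X (\<sigma> x)" if "x \<in> F" for x
    proof -
      have "W \<subseteq> p ` U x"
        using that V(3) unfolding W_def by blast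
      moreover have "continuous_map (subtopology Y (p ` U x)) X (inv_into (U x) p)"
        using U_inverse F(2) that by blast
      ultimately show ?thesis
        unfolding \<sigma>_def by (blast intro: continuous_map_from_subtopology_mono)
    qed
    show "p (\<sigma> x y) = y" if "x \<in> F" "y \<in> W" for x y
      using \<sigma> that by blast
    show "inj_on (\<lambda>x. \<sigma> x y) F" if "y \<in> W" for y
    proof (rule inj_onI)
      fix x x' assume xx': "x \<in> F" "x' \<in> F" "\<sigma> x y = \<sigma> x' y"
      have "\<sigma> x y \<in> V0 x" "\<sigma> x' y \<in> V0 x'"
        using \<sigma>(1)[OF xx'(1) that] \<sigma>(1)[OF xx'(2) that] unfolding V_def by auto
      then have "\<sigma> x y \<in> V0 x \<inter> V0 x'"
        using xx'(3) by simp
      then show "x = x'"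
        using V0(2)[of x x'] \<open>x \<in> F\<close> \<open>x' \<in> F\<close> unfolding disjnt_def by blast
    qed
    show "{x \<in> K. p x = y} \<subseteq> (\<lambda>x. \<sigma> x y) ` F" if y: "y \<in> W" for y
    proof
      fix x' assume x': "x' \<in> {x \<in> K. p x = y}"
      then obtain x where x: "x \<in> F" "x' \<in> V x"
        using W0(3) y unfolding W_def by blast
      moreover have "inj_on p (U x)"
        using U F(2) x(1) by blast
      ultimately have "\<sigma> x y = x'"
        using x' V(3)[OF x(1)] unfolding \<sigma>_def by (auto intro: inv_into_f_f)
      then show "x' \<in> (\<lambda>x. \<sigma> x y) ` F"
        using x(1) by blast
    qed
  qed
qed

lemma continuous_map_sum_over_compact_fibres:
  fixes b :: "'a \<Rightarrow> real"
  assumes X: "Hausdorff_space X" and Y: "Hausdorff_space Y"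
    and p: "continuous_map X Y p" "local_homeomorphism_map X Y p"
    and b: "continuous_map X euclidean b" and K: "compactin X K"
    and supp: "\<And>x. x \<in> topspace X \<Longrightarrow> x \<notin> K \<Longrightarrow> b x = 0"
  shows "continuous_map Y euclidean (\<lambda>y. \<Sum>x\<in>{x \<in> K. p x = y}. b x)"
proof (rule continuous_map_locally)
  fix y0 assume y0: "y0 \<in> topspace Y"
  define F where "F = {x \<in> K. p x = y0}"
  obtain W \<sigma> where W: "openin Y W" "y0 \<in> W"
    and \<sigma>_cont: "\<And>x. x \<in> F \<Longrightarrow> continuous_map (subtopology Y W) X (\<sigma> x)"
    and \<sigma>_fibre: "\<And>x y. x \<in> F \<Longrightarrow> y \<in> W \<Longrightarrow> p (\<sigma> x y) = y"
    and \<sigma>_inj: "\<And>y. y \<in> W \<Longrightarrow> inj_on (\<lambda>x. \<sigma> x y) F"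
    and \<sigma>_covers: "\<And>y. y \<in> W \<Longrightarrow> {x \<in> K. p x = y} \<subseteq> (\<lambda>x. \<sigma> x y) ` F"
    using compact_fibres_local_sections[OF X Y p K y0] unfolding F_def by blast
  have "finite F"
    unfolding F_def using p(2) K by (rule finite_fibre_Int_compactin)
  have \<sigma>_X: "\<sigma> x y \<in> topspace X" if "x \<in> F" "y \<in> W" for x y
    using continuous_map_image_subset_topspace[OF \<sigma>_cont[OF that(1)]] that(2) openin_subset[OF W(1)]
    by force
  have "(\<Sum>x\<in>{x \<in> K. p x = y}. b x) = (\<Sum>x\<in>F. b (\<sigma> x y))" if y: "y \<in> W" for y
  proof -
    have "(\<Sum>x\<in>{x \<in> K. p x = y}. b x) = (\<Sum>x\<in>(\<lambda>x. \<sigma> x y) ` F. b x)"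
      by (rule sum.mono_neutral_left)
        (use \<open>finite F\<close> \<sigma>_covers[OF y] \<sigma>_fibre[OF _ y] supp[OF \<sigma>_X[OF _ y]] in auto)
    also have "\<dots> = (\<Sum>x\<in>F. b (\<sigma> x y))"
      by (rule sum.reindex[OF \<sigma>_inj[OF y], unfolded comp_def])
    finally show ?thesis .
  qed
  moreover have "continuous_map (subtopology Y W) euclidean (\<lambda>y. \<Sum>x\<in>F. b (\<sigma> x y))"
    using \<sigma>_cont b by (intro continuous_map_sum \<open>finite F\<close>) (auto intro: continuous_map_compose[unfolded comp_def])
  ultimately have "continuous_map (subtopology Y W) euclidean (\<lambda>y. \<Sum>x\<in>{x \<in> K. p x = y}. b x)"
    by (auto intro: continuous_map_eq)
  then show "\<exists>W. openin Y W \<and> y0 \<in> W \<and>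
      continuous_map (subtopology Y W) euclidean (\<lambda>y. \<Sum>x\<in>{x \<in> K. p x = y}. b x)"
    using W by blast
qed

section \<open>Fibrewise square sums\<close>

definition fibre_sq_sum :: "'a set \<Rightarrow> ('a \<Rightarrow> 'b) \<Rightarrow> ('a \<Rightarrow> real) \<Rightarrow> 'b \<Rightarrow> ennreal" where
  "fibre_sq_sum A p a y = (\<Sum>\<^sub>\<infinity>x\<in>{x \<in> A. p x = y}. ennreal ((a x)\<^sup>2))"

text \<open>The function of the theorem. Note that \<open>enn2real\<close> sends an infinite fibre sum to \<open>0\<close>.\<close>

definition fibre_norm :: "'g set \<Rightarrow> ('g \<Rightarrow> 'g) \<Rightarrow> ('g \<Rightarrow> 'g) \<Rightarrow> ('g \<Rightarrow> real) \<Rightarrow> 'g \<Rightarrow> real" where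
  "fibre_norm G r s a x = sqrt (enn2real (max (fibre_sq_sum G s a x) (fibre_sq_sum G r a x)))"

lemma fibre_sq_sum_le_l2sq:
  assumes "x \<in> units G r"
  shows "fibre_sq_sum G s a x \<le> l2sq G r s a" "fibre_sq_sum G r a x \<le> l2sq G r s a"
  unfolding l2sq_def fibre_sq_sum_def using assms by (auto intro: SUP_upper2)

lemma fibre_sq_sum_compact_support:
  assumes "K \<subseteq> A" "finite {x \<in> K. p x = y}" "\<And>x. x \<in> A \<Longrightarrow> x \<notin> K \<Longrightarrow> a x = 0"
  shows "fibre_sq_sum A p a y = ennreal (\<Sum>x\<in>{x \<in> K. p x = y}. (a x)\<^sup>2)"
proof -
  have "fibre_sq_sum A p a y = (\<Sum>\<^sub>\<infinity>x\<in>{x \<in> K. p x = y}. ennreal ((a x)\<^sup>2))"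
    unfolding fibre_sq_sum_def by (rule infsum_cong_neutral) (use assms in auto)
  also have "\<dots> = ennreal (\<Sum>x\<in>{x \<in> K. p x = y}. (a x)\<^sup>2)"
    using assms(2) by (simp add: sum_ennreal)
  finally show ?thesis .
qed

lemma fibre_norm_eq_max:
  assumes "fibre_sq_sum G s a x < top" "fibre_sq_sum G r a x < top"
  shows "fibre_norm G r s a x =
    max (sqrt (enn2real (fibre_sq_sum G s a x))) (sqrt (enn2real (fibre_sq_sum G r a x)))"
proof -
  have "enn2real (max u v) = max (enn2real u) (enn2real v)" if "u < top" "v < top" for u v :: ennreal
    using that enn2real_mono[of u v] enn2real_mono[of v u] by (auto simp: max_def)
  then show ?thesis
    using assms unfolding fibre_norm_def by (auto simp: max_def)
qed

lemma continuous_map_fibre_norm: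
  assumes X: "Hausdorff_space X"
    and r: "continuous_map X X r" "local_homeomorphism_map X X r"
    and s: "continuous_map X X s" "local_homeomorphism_map X X s"
    and a: "continuous_map X euclidean a" and K: "compactin X K"
    and supp: "\<And>x. x \<in> topspace X \<Longrightarrow> x \<notin> K \<Longrightarrow> a x = 0"
  shows "continuous_map X euclidean (fibre_norm (topspace X) r s a)"
proof -
  have sum_eq: "fibre_sq_sum (topspace X) p a y = ennreal (\<Sum>x\<in>{x \<in> K. p x = y}. (a x)\<^sup>2)"
    if "local_homeomorphism_map X X p" for p y
    using compactin_subset_topspace[OF K] finite_fibre_Int_compactin[OF that K] supp
    by (rule fibre_sq_sum_compact_support)
  have "fibre_norm (topspace X) r s a =
      (\<lambda>y. max (sqrt (\<Sum>x\<in>{x \<in> K. s x = y}. (a x)\<^sup>2)) (sqrt (\<Sum>x\<in>{x \<in> K. r x = y}. (a x)\<^sup>2)))"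
    by (rule ext, subst fibre_norm_eq_max) (simp_all add: sum_eq r(2) s(2) sum_nonneg)
  moreover have sum_cont: "continuous_map X euclidean (\<lambda>y. \<Sum>x\<in>{x \<in> K. p x = y}. (a x)\<^sup>2)"
    if "continuous_map X X p" "local_homeomorphism_map X X p" for p
    using X X that _ K by (rule continuous_map_sum_over_compact_fibres) (use a supp in \<open>auto intro: continuous_intros\<close>)
  ultimately show ?thesis
    using sum_cont[OF r] sum_cont[OF s] by (simp add: continuous_map_real_max continuous_map_sqrt)
qed

lemma fibre_norm_diff_le:
  fixes a b d :: "'g \<Rightarrow> real"
  assumes x: "x \<in> units G r"
    and nonneg: "\<And>\<gamma>. \<gamma> \<in> G \<Longrightarrow> 0 \<le> a \<gamma> \<and> 0 \<le> b \<gamma>"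
    and diff: "\<And>\<gamma>. \<gamma> \<in> G \<Longrightarrow> \<bar>a \<gamma> - b \<gamma>\<bar> \<le> d \<gamma>"
    and b_finite: "fibre_sq_sum G s b x < top" "fibre_sq_sum G r b x < top"
    and d_finite: "l2sq G r s d < top"
  shows "\<bar>fibre_norm G r s a x - fibre_norm G r s b x\<bar> \<le> sqrt (enn2real (l2sq G r s d))"
proof -
  define D where "D = enn2real (l2sq G r s d)"
  have D: "l2sq G r s d = ennreal D" "0 \<le> D"
    using d_finite unfolding D_def by (auto simp: ennreal_enn2real_if)
  have "fibre_sq_sum G p a x < top \<and>
      \<bar>sqrt (enn2real (fibre_sq_sum G p a x)) - sqrt (enn2real (fibre_sq_sum G p b x))\<bar> \<le> sqrt D"
    if "fibre_sq_sum G p b x < top" "fibre_sq_sum G p d x \<le> l2sq G r s d" for p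
  proof -
    have "fibre_sq_sum G p d x \<le> ennreal D"
      using that(2) D(1) by simp
    then show ?thesis
      using sqrt_infsum_square_diff_le[where A = "{\<gamma> \<in> G. p \<gamma> = x}" and a = a and b = b and d = d and D = D]
        nonneg diff that(1) D(2)
      unfolding fibre_sq_sum_def by blast
  qed
  then have a_finite: "fibre_sq_sum G s a x < top" "fibre_sq_sum G r a x < top"
    and diff_s: "\<bar>sqrt (enn2real (fibre_sq_sum G s a x)) - sqrt (enn2real (fibre_sq_sum G s b x))\<bar> \<le> sqrt D"
    and diff_r: "\<bar>sqrt (enn2real (fibre_sq_sum G r a x)) - sqrt (enn2real (fibre_sq_sum G r b x))\<bar> \<le> sqrt D"
    using b_finite fibre_sq_sum_le_l2sq[OF x] by blast+
  have "\<bar>max (sqrt (enn2real (fibre_sq_sum G s a x))) (sqrt (enn2real (fibre_sq_sum G r a x))) -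
      max (sqrt (enn2real (fibre_sq_sum G s b x))) (sqrt (enn2real (fibre_sq_sum G r b x)))\<bar> \<le> sqrt D"
    using diff_s diff_r by (rule abs_max_diff_le)
  then show ?thesis
    using a_finite b_finite unfolding D_def by (simp add: fibre_norm_eq_max)
qed

lemma groupoidD:
  assumes "groupoid G r s m i"
  shows groupoid_closed: "\<And>a. a \<in> G \<Longrightarrow> r a \<in> G \<and> s a \<in> G \<and> i a \<in> G"
    and groupoid_range_source: "\<And>a. a \<in> G \<Longrightarrow> r (r a) = r a \<and> s (r a) = r a \<and> r (s a) = s a \<and> s (s a) = s a"
    and groupoid_mult: "\<And>a b. a \<in> G \<Longrightarrow> b \<in> G \<Longrightarrow> s a = r b \<Longrightarrow> m a b \<in> G \<and> r (m a b) = r a \<and> s (m a b) = s b"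
    and groupoid_assoc: "\<And>a b c. a \<in> G \<Longrightarrow> b \<in> G \<Longrightarrow> c \<in> G \<Longrightarrow> s a = r b \<Longrightarrow> s b = r c \<Longrightarrow>
      m (m a b) c = m a (m b c)"
    and groupoid_unit_mult: "\<And>a. a \<in> G \<Longrightarrow> m (r a) a = a \<and> m a (s a) = a"
    and groupoid_inverse: "\<And>a. a \<in> G \<Longrightarrow> r (i a) = s a \<and> s (i a) = r a \<and> m a (i a) = r a \<and> m (i a) a = s a"
  using assms unfolding groupoid_def by blast+

lemma groupoid_inv_inv:
  assumes g: "groupoid G r s m i" and a: "a \<in> G"
  shows "i (i a) = a"
proof -
  have b: "i a \<in> G" "r (i a) = s a" "s (i a) = r a" "m (i a) a = s a"
    using groupoid_closed[OF g a] groupoid_inverse[OF g a] by auto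
  have ib: "i (i a) \<in> G" "s (i (i a)) = r (i a)" "m (i (i a)) (i a) = s (i a)"
    using groupoid_closed[OF g b(1)] groupoid_inverse[OF g b(1)] by auto
  have "i (i a) = m (i (i a)) (m (i a) a)"
    using groupoid_unit_mult[OF g ib(1)] ib(2) b(2,4) by simp
  also have "\<dots> = m (m (i (i a)) (i a)) a"
    using groupoid_assoc[OF g ib(1) b(1) a] ib(2) b(3) by simp
  also have "\<dots> = a"
    using ib(3) b(3) groupoid_unit_mult[OF g a] by simp
  finally show ?thesis .
qed

lemma etale_groupoid_range_source:
  assumes "etale_groupoid T r s m i"
  shows "continuous_map T T r" "local_homeomorphism_map T T r"
    and "continuous_map T T s" "local_homeomorphism_map T T s"
proof -
  show r: "local_homeomorphism_map T T r"
    using assms unfolding etale_groupoid_def local_homeomorphism_map_def by blast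
  have g: "groupoid (topspace T) r s m i" and "continuous_map T T i"
    using assms unfolding etale_groupoid_def topological_groupoid_def by auto
  then have "homeomorphic_map T T i"
    by (intro homeomorphic_map_involution) (auto intro: groupoid_inv_inv)
  then have "local_homeomorphism_map T T (r \<circ> i)"
    using r by (rule local_homeomorphism_map_compose_homeomorphism)
  then show "local_homeomorphism_map T T s"
    by (rule local_homeomorphism_map_eq) (use groupoid_inverse[OF g] in simp)
  show "continuous_map T T r" "continuous_map T T s"
    using assms unfolding etale_groupoid_def topological_groupoid_def by auto
qed

section \<open>Quotient topology\<close>

lemma openin_quot_topology:
  assumes R: "equiv (topspace X) R"
  shows "openin (quot_topology X R) U \<longleftrightarrow> U \<subseteq> topspace X // R \<and> openin X (\<Union>U)"
proof -
  have Int: "U1 \<inter> U2 \<subseteq> topspace X // R \<and> openin X (\<Union>(U1 \<inter> U2))"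
    if U: "U1 \<subseteq> topspace X // R \<and> openin X (\<Union>U1)" "U2 \<subseteq> topspace X // R \<and> openin X (\<Union>U2)"
    for U1 U2 :: "'a set set"
  proof -
    have "\<Union>(U1 \<inter> U2) = \<Union>U1 \<inter> \<Union>U2"
      using U quotient_disj[OF R] by blast
    then show ?thesis
      using U by (simp add: openin_Int le_infI1)
  qed
  have Union: "\<Union>\<K> \<subseteq> topspace X // R \<and> openin X (\<Union>(\<Union>\<K>))"
    if \<K>: "\<forall>U\<in>\<K>. U \<subseteq> topspace X // R \<and> openin X (\<Union>U)" for \<K> :: "'a set set set"
  proof -
    have "\<Union>(\<Union>\<K>) = (\<Union>U\<in>\<K>. \<Union>U)"
      by blast
    then show ?thesis
      using \<K> by (metis Sup_least image_iff openin_Union)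
  qed
  have "istopology (\<lambda>U. U \<subseteq> topspace X // R \<and> openin X (\<Union>U))"
    unfolding istopology_def using Int Union by blast
  then show ?thesis
    unfolding quot_topology_def by simp
qed

lemma topspace_quot_topology:
  assumes R: "equiv (topspace X) R"
  shows "topspace (quot_topology X R) = topspace X // R"
proof
  show "topspace (quot_topology X R) \<subseteq> topspace X // R"
    unfolding topspace_def openin_quot_topology[OF R] by blast
  have "openin (quot_topology X R) (topspace X // R)"
    unfolding openin_quot_topology[OF R] Union_quotient[OF R] by simp
  then show "topspace X // R \<subseteq> topspace (quot_topology X R)"
    by (rule openin_subset)
qed

lemma continuous_map_quot_topology_some:
  assumes R: "equiv (topspace X) R" and h: "continuous_map X Y h"
    and respects: "\<And>p q. (p, q) \<in> R \<Longrightarrow> h p = h q"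
  shows "continuous_map (quot_topology X R) Y (\<lambda>c. h (SOME p. p \<in> c))"
proof -
  have some_in: "(SOME p. p \<in> c) \<in> c" if "c \<in> topspace X // R" for c
    using in_quotient_imp_non_empty[OF R that] by (simp add: some_in_eq)
  have h_class: "h (SOME p. p \<in> c) = h p" if "c \<in> topspace X // R" "p \<in> c" for c p
    using respects in_quotient_imp_in_rel[OF R that(1)] some_in[OF that(1)] that(2) by blast
  have classes_X: "c \<subseteq> topspace X" if "c \<in> topspace X // R" for c
    using R that by (rule in_quotient_imp_subset)
  have "\<Union>{c \<in> topspace X // R. h (SOME p. p \<in> c) \<in> V} = {p \<in> topspace X. h p \<in> V}" for V
  proof
    show "\<Union>{c \<in> topspace X // R. h (SOME p. p \<in> c) \<in> V} \<subseteq> {p \<in> topspace X. h p \<in> V}"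
      using h_class classes_X by fastforce
    show "{p \<in> topspace X. h p \<in> V} \<subseteq> \<Union>{c \<in> topspace X // R. h (SOME p. p \<in> c) \<in> V}"
      using h_class equiv_class_self[OF R] quotientI by fastforce
  qed
  moreover have "openin X {p \<in> topspace X. h p \<in> V}" if "openin Y V" for V
    using h that by (rule openin_continuous_map_preimage)
  moreover have "h (SOME p. p \<in> c) \<in> topspace Y" if "c \<in> topspace X // R" for c
    using some_in[OF that] classes_X[OF that] continuous_map_image_subset_topspace[OF h] by blast
  ultimately show ?thesis
    unfolding continuous_map_def topspace_quot_topology[OF R] openin_quot_topology[OF R] by auto
qed

section \<open>Twists\<close>

lemma circle_iff: "w \<in> circle \<longleftrightarrow> cmod w = 1"
  unfolding circle_def by simp

lemma circle_cnj: "w \<in> circle \<Longrightarrow> cnj w \<in> circle"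
  by (simp add: circle_iff)

lemma circle_mult: "w \<in> circle \<Longrightarrow> v \<in> circle \<Longrightarrow> w * v \<in> circle"
  by (simp add: circle_iff norm_mult)

lemma circle_cnj_mult: "w \<in> circle \<Longrightarrow> cnj w * w = 1"
  by (metis circle_iff complex_norm_square mult.commute of_real_1 power_one)

locale groupoid_twist =
  fixes TG :: "'g topology" and r s :: "'g \<Rightarrow> 'g" and m :: "'g \<Rightarrow> 'g \<Rightarrow> 'g" and i :: "'g \<Rightarrow> 'g"
    and TS :: "'s topology" and rS sS :: "'s \<Rightarrow> 's" and mS :: "'s \<Rightarrow> 's \<Rightarrow> 's" and iS :: "'s \<Rightarrow> 's"
    and \<iota> :: "complex \<times> 'g \<Rightarrow> 's" and \<pi> :: "'s \<Rightarrow> 'g"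
  assumes groupoid_G: "groupoid (topspace TG) r s m i"
    and twist: "twist TG r s m i TS rS sS mS iS \<iota> \<pi>"
begin

abbreviation "G \<equiv> topspace TG"
abbreviation "S \<equiv> topspace TS"
abbreviation "G0 \<equiv> units G r"
abbreviation "act \<equiv> tact r mS \<iota> \<pi>"
abbreviation "L \<equiv> Lrel S r mS \<iota> \<pi>"

lemma twist_algebraic_part:
  "groupoid S rS sS mS iS \<and> \<pi> ` S = G \<and>
   (\<forall>\<sigma>\<in>S. \<pi> (rS \<sigma>) = r (\<pi> \<sigma>) \<and> \<pi> (sS \<sigma>) = s (\<pi> \<sigma>)) \<and>
   (\<forall>a\<in>S. \<forall>b\<in>S. sS a = rS b \<longrightarrow> \<pi> (mS a b) = m (\<pi> a) (\<pi> b)) \<and>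
   inj_on \<pi> (units S rS) \<and>
   (\<forall>z\<in>circle. \<forall>x\<in>G0. \<iota> (z, x) \<in> S \<and> \<pi> (\<iota> (z, x)) = x \<and>
      rS (\<iota> (z, x)) = \<iota> (1, x) \<and> sS (\<iota> (z, x)) = \<iota> (1, x)) \<and>
   (\<forall>z\<in>circle. \<forall>w\<in>circle. \<forall>x\<in>G0. mS (\<iota> (z, x)) (\<iota> (w, x)) = \<iota> (z * w, x)) \<and>
   \<iota> ` (circle \<times> G0) = {\<sigma> \<in> S. \<pi> \<sigma> \<in> G0}"
  using twist unfolding twist_def Let_def topological_groupoid_def by (elim conjE) (intro conjI; assumption)

lemma
  shows groupoid_S: "groupoid S rS sS mS iS"
    and pi_S: "\<pi> ` S = G"
    and pi_range_source: "\<And>\<sigma>. \<sigma> \<in> S \<Longrightarrow> \<pi> (rS \<sigma>) = r (\<pi> \<sigma>) \<and> \<pi> (sS \<sigma>) = s (\<pi> \<sigma>)"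
    and pi_mult: "\<And>a b. a \<in> S \<Longrightarrow> b \<in> S \<Longrightarrow> sS a = rS b \<Longrightarrow> \<pi> (mS a b) = m (\<pi> a) (\<pi> b)"
    and pi_inj_units: "inj_on \<pi> (units S rS)"
    and iota: "\<And>z x. z \<in> circle \<Longrightarrow> x \<in> G0 \<Longrightarrow>
      \<iota> (z, x) \<in> S \<and> \<pi> (\<iota> (z, x)) = x \<and> rS (\<iota> (z, x)) = \<iota> (1, x) \<and> sS (\<iota> (z, x)) = \<iota> (1, x)"
    and iota_mult: "\<And>z w x. z \<in> circle \<Longrightarrow> w \<in> circle \<Longrightarrow> x \<in> G0 \<Longrightarrow>
      mS (\<iota> (z, x)) (\<iota> (w, x)) = \<iota> (z * w, x)"
    and iota_exact: "\<iota> ` (circle \<times> G0) = {\<sigma> \<in> S. \<pi> \<sigma> \<in> G0}"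
  using twist_algebraic_part by blast+

lemma pi_in_G: "\<sigma> \<in> S \<Longrightarrow> \<pi> \<sigma> \<in> G"
  using pi_S by blast

lemma range_in_G0: "\<gamma> \<in> G \<Longrightarrow> r \<gamma> \<in> G0"
  unfolding units_def by blast

lemma source_in_G0: "\<gamma> \<in> G \<Longrightarrow> s \<gamma> \<in> G0"
  using groupoid_closed[OF groupoid_G] groupoid_range_source[OF groupoid_G] unfolding units_def
  by (metis image_eqI)

lemma unit_eq_iota:
  assumes "u \<in> units S rS" "\<pi> u \<in> G0"
  shows "u = \<iota> (1, \<pi> u)"
proof -
  have "\<iota> (1, \<pi> u) \<in> units S rS" "\<pi> (\<iota> (1, \<pi> u)) = \<pi> u"
    using iota[of 1 "\<pi> u"] assms(2) unfolding units_def by (auto simp: circle_iff intro!: image_eqI)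
  then show ?thesis
    using assms(1) pi_inj_units by (metis inj_onD)
qed

lemma range_S_eq: "\<sigma> \<in> S \<Longrightarrow> rS \<sigma> = \<iota> (1, r (\<pi> \<sigma>))"
  using unit_eq_iota[of "rS \<sigma>"] pi_range_source range_in_G0[OF pi_in_G] unfolding units_def by auto

lemma source_S_eq: "\<sigma> \<in> S \<Longrightarrow> sS \<sigma> = \<iota> (1, s (\<pi> \<sigma>))"
proof -
  assume \<sigma>: "\<sigma> \<in> S"
  have "sS \<sigma> \<in> units S rS"
    using groupoid_closed[OF groupoid_S \<sigma>] groupoid_range_source[OF groupoid_S \<sigma>] unfolding units_def
    by (metis image_eqI)
  then show ?thesis
    using unit_eq_iota[of "sS \<sigma>"] pi_range_source[OF \<sigma>] source_in_G0[OF pi_in_G[OF \<sigma>]] by auto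
qed

lemma act_closed:
  assumes w: "w \<in> circle" and \<sigma>: "\<sigma> \<in> S"
  shows "act w \<sigma> \<in> S" "\<pi> (act w \<sigma>) = \<pi> \<sigma>"
proof -
  define x where "x = r (\<pi> \<sigma>)"
  have x: "x \<in> G0"
    unfolding x_def by (rule range_in_G0[OF pi_in_G[OF \<sigma>]])
  have \<iota>: "\<iota> (w, x) \<in> S" "\<pi> (\<iota> (w, x)) = x" "sS (\<iota> (w, x)) = rS \<sigma>"
    using iota[OF w x] range_S_eq[OF \<sigma>] unfolding x_def by auto
  show "act w \<sigma> \<in> S"
    unfolding tact_def x_def[symmetric] using groupoid_mult[OF groupoid_S \<iota>(1) \<sigma> \<iota>(3)] by blast
  have "\<pi> (act w \<sigma>) = m x (\<pi> \<sigma>)"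
    unfolding tact_def x_def[symmetric] using pi_mult[OF \<iota>(1) \<sigma> \<iota>(3)] \<iota>(2) by simp
  also have "\<dots> = \<pi> \<sigma>"
    unfolding x_def using groupoid_unit_mult[OF groupoid_G pi_in_G[OF \<sigma>]] by simp
  finally show "\<pi> (act w \<sigma>) = \<pi> \<sigma>" .
qed

lemma act_one: "\<sigma> \<in> S \<Longrightarrow> act 1 \<sigma> = \<sigma>"
  unfolding tact_def using range_S_eq groupoid_unit_mult[OF groupoid_S] by simp

lemma act_act:
  assumes w: "w \<in> circle" and v: "v \<in> circle" and \<sigma>: "\<sigma> \<in> S"
  shows "act w (act v \<sigma>) = act (w * v) \<sigma>"
proof -
  define x where "x = r (\<pi> \<sigma>)"
  have x: "x \<in> G0"
    unfolding x_def by (rule range_in_G0[OF pi_in_G[OF \<sigma>]])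
  have \<iota>w: "\<iota> (w, x) \<in> S" "sS (\<iota> (w, x)) = \<iota> (1, x)"
    and \<iota>v: "\<iota> (v, x) \<in> S" "rS (\<iota> (v, x)) = \<iota> (1, x)" "sS (\<iota> (v, x)) = rS \<sigma>"
    using iota[OF w x] iota[OF v x] range_S_eq[OF \<sigma>] unfolding x_def by auto
  have "act w (act v \<sigma>) = mS (\<iota> (w, x)) (mS (\<iota> (v, x)) \<sigma>)"
    unfolding tact_def[of r mS \<iota> \<pi> w] act_closed(2)[OF v \<sigma>] unfolding tact_def x_def ..
  also have "\<dots> = mS (mS (\<iota> (w, x)) (\<iota> (v, x))) \<sigma>"
    using groupoid_assoc[OF groupoid_S \<iota>w(1) \<iota>v(1) \<sigma>] \<iota>w(2) \<iota>v(2,3) by simp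
  also have "\<dots> = mS (\<iota> (w * v, x)) \<sigma>"
    by (simp only: iota_mult[OF w v x])
  also have "\<dots> = act (w * v) \<sigma>"
    unfolding tact_def x_def ..
  finally show ?thesis .
qed

lemma pi_eq_imp_act:
  assumes \<sigma>1: "\<sigma>1 \<in> S" and \<sigma>2: "\<sigma>2 \<in> S" and eq: "\<pi> \<sigma>1 = \<pi> \<sigma>2"
  obtains w where "w \<in> circle" "\<sigma>2 = act w \<sigma>1"
proof -
  \<comment> \<open>\<open>\<tau>\<close> lies over the unit \<open>r (\<pi> \<sigma>1)\<close>, so by exactness it is in the image of \<open>\<iota>\<close>.\<close>
  define \<tau> where "\<tau> = mS \<sigma>2 (iS \<sigma>1)"
  have inv: "iS \<sigma>1 \<in> S" "rS (iS \<sigma>1) = sS \<sigma>1" "sS (iS \<sigma>1) = rS \<sigma>1" "mS \<sigma>1 (iS \<sigma>1) = rS \<sigma>1"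
    "mS (iS \<sigma>1) \<sigma>1 = sS \<sigma>1"
    using groupoid_closed[OF groupoid_S \<sigma>1] groupoid_inverse[OF groupoid_S \<sigma>1] by auto
  have ss: "sS \<sigma>2 = sS \<sigma>1"
    using source_S_eq[OF \<sigma>1] source_S_eq[OF \<sigma>2] eq by simp
  have "\<tau> \<in> S"
    unfolding \<tau>_def using groupoid_mult[OF groupoid_S \<sigma>2 inv(1)] ss inv(2) by simp
  moreover have "\<pi> \<tau> = \<pi> (mS \<sigma>1 (iS \<sigma>1))"
    unfolding \<tau>_def using pi_mult \<sigma>1 \<sigma>2 inv(1,2) ss eq by simp
  then have \<pi>\<tau>: "\<pi> \<tau> = r (\<pi> \<sigma>1)"
    using inv(4) pi_range_source[OF \<sigma>1] by simp
  ultimately have "\<tau> \<in> \<iota> ` (circle \<times> G0)"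
    unfolding iota_exact using range_in_G0[OF pi_in_G[OF \<sigma>1]] by simp
  then obtain w x where wx: "w \<in> circle" "x \<in> G0" "\<tau> = \<iota> (w, x)"
    by blast
  then have w: "\<tau> = \<iota> (w, r (\<pi> \<sigma>1))"
    using iota[OF wx(1,2)] \<pi>\<tau> by simp
  have "act w \<sigma>1 = mS \<tau> \<sigma>1"
    unfolding tact_def w ..
  also have "\<dots> = mS \<sigma>2 (mS (iS \<sigma>1) \<sigma>1)"
    unfolding \<tau>_def using groupoid_assoc[OF groupoid_S \<sigma>2 inv(1) \<sigma>1] ss inv(2,3) by simp
  also have "\<dots> = \<sigma>2"
    using inv(5) ss groupoid_unit_mult[OF groupoid_S \<sigma>2] by simp
  finally show thesis
    using that wx(1) by simp
qed

lemma Lrel_iff: "((z1, \<sigma>1), (z2, \<sigma>2)) \<in> L \<longleftrightarrow>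
    \<sigma>1 \<in> S \<and> \<sigma>2 \<in> S \<and> (\<exists>w\<in>circle. z1 = cnj w * z2 \<and> \<sigma>1 = act w \<sigma>2)"
  unfolding Lrel_def by simp

lemma equiv_Lrel: "equiv (UNIV \<times> S) L"
proof (rule equivI)
  show "L \<subseteq> (UNIV \<times> S) \<times> (UNIV \<times> S)"
    unfolding Lrel_def by auto
  show "refl_on (UNIV \<times> S) L"
  proof (rule refl_onI)
    fix p :: "complex \<times> 's" assume "p \<in> UNIV \<times> S"
    then obtain z \<sigma> where p: "p = (z, \<sigma>)" and \<sigma>: "\<sigma> \<in> S"
      by blast
    have "((z, \<sigma>), (z, \<sigma>)) \<in> L"
      unfolding Lrel_iff using \<sigma> act_one[OF \<sigma>] by (intro conjI bexI[of _ 1]) (simp_all add: circle_iff)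
    then show "(p, p) \<in> L"
      unfolding p .
  qed
  show "sym L"
  proof (rule symI)
    fix p q :: "complex \<times> 's"
    obtain z1 \<sigma>1 z2 \<sigma>2 where pq: "p = (z1, \<sigma>1)" "q = (z2, \<sigma>2)"
      by (cases p, cases q)
    assume "(p, q) \<in> L"
    then obtain w where \<sigma>: "\<sigma>1 \<in> S" "\<sigma>2 \<in> S" and w: "w \<in> circle" "z1 = cnj w * z2" "\<sigma>1 = act w \<sigma>2"
      unfolding pq Lrel_iff by blast
    have "z2 = cnj (cnj w) * z1"
      using w(2) circle_cnj_mult[OF w(1)] by (simp add: mult.assoc[symmetric] mult.commute)
    moreover have "\<sigma>2 = act (cnj w) \<sigma>1"
      using act_act[OF circle_cnj[OF w(1)] w(1) \<sigma>(2)] circle_cnj_mult[OF w(1)] act_one[OF \<sigma>(2)] w(3)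
      by simp
    ultimately show "(q, p) \<in> L"
      unfolding pq Lrel_iff using \<sigma> circle_cnj[OF w(1)] by blast
  qed
  show "trans L"
  proof (rule transI)
    fix p q t :: "complex \<times> 's"
    obtain z1 \<sigma>1 z2 \<sigma>2 z3 \<sigma>3 where pqt: "p = (z1, \<sigma>1)" "q = (z2, \<sigma>2)" "t = (z3, \<sigma>3)"
      by (cases p, cases q, cases t)
    assume "(p, q) \<in> L" "(q, t) \<in> L"
    then obtain w v where \<sigma>: "\<sigma>1 \<in> S" "\<sigma>3 \<in> S"
      and w: "w \<in> circle" "z1 = cnj w * z2" "\<sigma>1 = act w \<sigma>2"
      and v: "v \<in> circle" "z2 = cnj v * z3" "\<sigma>2 = act v \<sigma>3"
      unfolding pqt Lrel_iff by blast
    have "z1 = cnj (w * v) * z3"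
      using w(2) v(2) by (simp add: mult.assoc)
    moreover have "\<sigma>1 = act (w * v) \<sigma>3"
      using act_act[OF w(1) v(1) \<sigma>(2)] w(3) v(3) by simp
    ultimately show "(p, t) \<in> L"
      unfolding pqt Lrel_iff using \<sigma> circle_mult[OF w(1) v(1)] by blast
  qed
qed

lemma Lrel_cmod: "(p, q) \<in> L \<Longrightarrow> cmod (fst p) = cmod (fst q)"
  by (cases p, cases q) (auto simp: Lrel_iff circle_iff norm_mult)

lemma topspace_Ltop: "topspace (Ltop TS r mS \<iota> \<pi>) = (UNIV \<times> S) // L"
  unfolding Ltop_def using equiv_Lrel by (simp add: topspace_quot_topology)

lemma continuous_map_Labs: "continuous_map (Ltop TS r mS \<iota> \<pi>) euclidean Labs"
proof -
  have "equiv (topspace (prod_topology euclidean TS)) L"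
    using equiv_Lrel by simp
  moreover have "continuous_map (prod_topology euclidean TS) euclidean (\<lambda>p. cmod (fst p))"
    by (intro continuous_map_norm continuous_map_fst)
  ultimately have "continuous_map (Ltop TS r mS \<iota> \<pi>) euclidean (\<lambda>c. cmod (fst (SOME p. p \<in> c)))"
    unfolding Ltop_def using Lrel_cmod by (rule continuous_map_quot_topology_some)
  then show ?thesis
    unfolding Labs_def .
qed

lemma continuous_map_Labs_section:
  "cont_section TG TS r mS \<iota> \<pi> f \<Longrightarrow> continuous_map TG euclidean (\<lambda>\<gamma>. Labs (f \<gamma>))"
  unfolding cont_section_def using continuous_map_compose[OF _ continuous_map_Labs] by (auto simp: o_def)

lemma Labs_class: "\<sigma> \<in> S \<Longrightarrow> Labs (L `` {(z, \<sigma>)}) = cmod z"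
proof -
  assume \<sigma>: "\<sigma> \<in> S"
  have "(z, \<sigma>) \<in> L `` {(z, \<sigma>)}"
    using equiv_class_self[OF equiv_Lrel] \<sigma> by simp
  then have "((z, \<sigma>), SOME p. p \<in> L `` {(z, \<sigma>)}) \<in> L"
    by (metis Image_singleton_iff someI)
  then show ?thesis
    unfolding Labs_def using Lrel_cmod by (metis fst_conv)
qed

lemma cont_section_class:
  assumes f: "cont_section TG TS r mS \<iota> \<pi> f" and \<gamma>: "\<gamma> \<in> G"
  obtains z \<sigma> where "\<sigma> \<in> S" "\<pi> \<sigma> = \<gamma>" "f \<gamma> = L `` {(z, \<sigma>)}"
proof -
  have "f \<gamma> \<in> topspace (Ltop TS r mS \<iota> \<pi>)"
    using f \<gamma> unfolding cont_section_def by (meson continuous_map_image_subset_topspace image_subset_iff)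
  then have "f \<gamma> \<in> (UNIV \<times> S) // L"
    unfolding topspace_Ltop .
  then obtain z \<sigma> where z\<sigma>: "\<sigma> \<in> S" "f \<gamma> = L `` {(z, \<sigma>)}"
    unfolding quotient_def by blast
  moreover have "(z, \<sigma>) \<in> f \<gamma>"
    using equiv_class_self[OF equiv_Lrel, of "(z, \<sigma>)"] z\<sigma> by simp
  then have "\<pi> \<sigma> = \<gamma>"
    using f \<gamma> unfolding cont_section_def by (metis snd_conv)
  ultimately show thesis
    using that by blast
qed

lemma Labs_diff_le_Ldist:
  assumes f: "cont_section TG TS r mS \<iota> \<pi> f" and g: "cont_section TG TS r mS \<iota> \<pi> g"
    and \<gamma>: "\<gamma> \<in> G"
  shows "\<bar>Labs (f \<gamma>) - Labs (g \<gamma>)\<bar> \<le> Ldist (f \<gamma>) (g \<gamma>)"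
proof -
  obtain z1 \<sigma>1 where 1: "\<sigma>1 \<in> S" "\<pi> \<sigma>1 = \<gamma>" "f \<gamma> = L `` {(z1, \<sigma>1)}"
    using cont_section_class[OF f \<gamma>] .
  obtain z2 \<sigma>2 where 2: "\<sigma>2 \<in> S" "\<pi> \<sigma>2 = \<gamma>" "g \<gamma> = L `` {(z2, \<sigma>2)}"
    using cont_section_class[OF g \<gamma>] .
  obtain w where w: "w \<in> circle" "\<sigma>2 = act w \<sigma>1"
    using pi_eq_imp_act[OF 1(1) 2(1)] 1(2) 2(2) by metis
  \<comment> \<open>\<open>Ldist\<close> chooses representatives over a common point of \<open>\<Sigma>\<close>; \<open>\<sigma>1\<close> is one.\<close>
  have "((z2, \<sigma>2), (w * z2, \<sigma>1)) \<in> L"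
    using 1(1) 2(1) w circle_cnj_mult[OF w(1)] by (auto simp: Lrel_iff mult.assoc[symmetric])
  then have "(z1, \<sigma>1) \<in> f \<gamma>" "(w * z2, \<sigma>1) \<in> g \<gamma>"
    using 1 2 equiv_class_self[OF equiv_Lrel] by auto
  then have "\<exists>d. \<exists>\<sigma> y1 y2. (y1, \<sigma>) \<in> f \<gamma> \<and> (y2, \<sigma>) \<in> g \<gamma> \<and> d = cmod (y1 - y2)"
    by blast
  then have "\<exists>\<sigma> y1 y2. (y1, \<sigma>) \<in> f \<gamma> \<and> (y2, \<sigma>) \<in> g \<gamma> \<and> Ldist (f \<gamma>) (g \<gamma>) = cmod (y1 - y2)"
    unfolding Ldist_def by (rule someI_ex)
  then obtain \<sigma> y1 y2 where y: "(y1, \<sigma>) \<in> f \<gamma>" "(y2, \<sigma>) \<in> g \<gamma>" "Ldist (f \<gamma>) (g \<gamma>) = cmod (y1 - y2)"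
    by blast
  have "cmod y1 = Labs (f \<gamma>)"
    using y(1) 1(3) Labs_class[OF 1(1)] Lrel_cmod[of "(z1, \<sigma>1)" "(y1, \<sigma>)"] by simp
  moreover have "cmod y2 = Labs (g \<gamma>)"
    using y(2) 2(3) Labs_class[OF 2(1)] Lrel_cmod[of "(z2, \<sigma>2)" "(y2, \<sigma>)"] by simp
  ultimately show ?thesis
    using y(3) norm_triangle_ineq3[of y1 y2] by simp
qed

lemma Cc_fibre_norm:
  assumes etale: "etale_groupoid TG r s m i" and Hausdorff: "Hausdorff_space TG"
    and g: "g \<in> Cc TG TS r mS \<iota> \<pi>"
  shows "continuous_map TG euclidean (fibre_norm G r s (\<lambda>\<gamma>. Labs (g \<gamma>)))"
    and "fibre_sq_sum G s (\<lambda>\<gamma>. Labs (g \<gamma>)) x < top" "fibre_sq_sum G r (\<lambda>\<gamma>. Labs (g \<gamma>)) x < top"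
proof -
  define K where "K = TG closure_of {\<gamma> \<in> G. Labs (g \<gamma>) \<noteq> 0}"
  have g_section: "cont_section TG TS r mS \<iota> \<pi> g" and K: "compactin TG K"
    using g unfolding Cc_def K_def by simp_all
  have supp: "Labs (g \<gamma>) = 0" if "\<gamma> \<in> G" "\<gamma> \<notin> K" for \<gamma>
    using closure_of_subset[of "{\<gamma> \<in> G. Labs (g \<gamma>) \<noteq> 0}" TG] that unfolding K_def by auto
  have "continuous_map TG euclidean (\<lambda>\<gamma>. Labs (g \<gamma>))"
    using g_section by (rule continuous_map_Labs_section)
  then show "continuous_map TG euclidean (fibre_norm G r s (\<lambda>\<gamma>. Labs (g \<gamma>)))"
    using continuous_map_fibre_norm[OF Hausdorff etale_groupoid_range_source[OF etale]] K supp by blast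
  have "fibre_sq_sum G p (\<lambda>\<gamma>. Labs (g \<gamma>)) x < top" if "local_homeomorphism_map TG TG p" for p
    using fibre_sq_sum_compact_support[OF compactin_subset_topspace[OF K]
        finite_fibre_Int_compactin[OF that K] supp] by simp
  then show "fibre_sq_sum G s (\<lambda>\<gamma>. Labs (g \<gamma>)) x < top" "fibre_sq_sum G r (\<lambda>\<gamma>. Labs (g \<gamma>)) x < top"
    using etale_groupoid_range_source[OF etale] by blast+
qed

lemma fibre_norm_Cc_diff_le:
  assumes etale: "etale_groupoid TG r s m i" and Hausdorff: "Hausdorff_space TG"
    and f: "cont_section TG TS r mS \<iota> \<pi> f" and g: "g \<in> Cc TG TS r mS \<iota> \<pi>"
    and x: "x \<in> G0" and finite: "l2sq G r s (\<lambda>\<gamma>. Ldist (f \<gamma>) (g \<gamma>)) < top"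
  shows "\<bar>fibre_norm G r s (\<lambda>\<gamma>. Labs (g \<gamma>)) x - fibre_norm G r s (\<lambda>\<gamma>. Labs (f \<gamma>)) x\<bar>
           \<le> sqrt (enn2real (l2sq G r s (\<lambda>\<gamma>. Ldist (f \<gamma>) (g \<gamma>))))"
proof -
  have "cont_section TG TS r mS \<iota> \<pi> g"
    using g unfolding Cc_def by blast
  then have "\<bar>fibre_norm G r s (\<lambda>\<gamma>. Labs (f \<gamma>)) x - fibre_norm G r s (\<lambda>\<gamma>. Labs (g \<gamma>)) x\<bar>
      \<le> sqrt (enn2real (l2sq G r s (\<lambda>\<gamma>. Ldist (f \<gamma>) (g \<gamma>))))"
    using Labs_diff_le_Ldist[OF f] Cc_fibre_norm(2,3)[OF etale Hausdorff g] finite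
    by (intro fibre_norm_diff_le[OF x]) (simp_all add: Labs_def)
  then show ?thesis
    by (simp add: abs_minus_commute)
qed

end

theorem lemma3p2:
  fixes TG :: "'g topology" and r s :: "'g \<Rightarrow> 'g" and m :: "'g \<Rightarrow> 'g \<Rightarrow> 'g" and i :: "'g \<Rightarrow> 'g"
    and TS :: "'s topology" and rS sS :: "'s \<Rightarrow> 's" and mS :: "'s \<Rightarrow> 's \<Rightarrow> 's" and iS :: "'s \<Rightarrow> 's"
    and \<iota> :: "complex \<times> 'g \<Rightarrow> 's" and \<pi> :: "'s \<Rightarrow> 'g"
    and f :: "'g \<Rightarrow> (complex \<times> 's) set"
  assumes "etale_groupoid TG r s m i"
    and "locally_compact_space TG" and "Hausdorff_space TG"
    and "twist TG r s m i TS rS sS mS iS \<iota> \<pi>"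
    and "f \<in> ell2 TG TS r s mS \<iota> \<pi>"
  shows "continuous_map (subtopology TG (units (topspace TG) r)) euclidean
     (\<lambda>x. sqrt (enn2real (max
        (\<Sum>\<^sub>\<infinity>\<gamma>\<in>{\<gamma>\<in>topspace TG. s \<gamma> = x}. ennreal ((Labs (f \<gamma>))\<^sup>2))
        (\<Sum>\<^sub>\<infinity>\<gamma>\<in>{\<gamma>\<in>topspace TG. r \<gamma> = x}. ennreal ((Labs (f \<gamma>))\<^sup>2)))))"
proof -
  interpret groupoid_twist TG r s m i TS rS sS mS iS \<iota> \<pi>
    using assms(1,4) by unfold_locales (auto simp: etale_groupoid_def topological_groupoid_def)
  obtain g where f: "cont_section TG TS r mS \<iota> \<pi> f" and g: "\<And>n. g n \<in> Cc TG TS r mS \<iota> \<pi>"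
    and lim: "(\<lambda>n. l2sq G r s (\<lambda>\<gamma>. Ldist (f \<gamma>) (g n \<gamma>))) \<longlonglongrightarrow> 0"
    using assms(5) unfolding ell2_def by blast
  define \<delta> where "\<delta> n = sqrt (enn2real (l2sq G r s (\<lambda>\<gamma>. Ldist (f \<gamma>) (g n \<gamma>))))" for n
  have "(\<lambda>n. l2sq G r s (\<lambda>\<gamma>. Ldist (f \<gamma>) (g n \<gamma>))) \<longlonglongrightarrow> ennreal 0"
    using lim by simp
  then have \<delta>: "\<delta> \<longlonglongrightarrow> 0"
    unfolding \<delta>_def using tendsto_real_sqrt[OF tendsto_enn2real] by fastforce
  have "\<forall>\<^sub>F n in sequentially. l2sq G r s (\<lambda>\<gamma>. Ldist (f \<gamma>) (g n \<gamma>)) < top"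
    using lim by (rule order_tendstoD) simp
  then have bound: "\<forall>\<^sub>F n in sequentially. \<forall>x\<in>topspace (subtopology TG G0).
      \<bar>fibre_norm G r s (\<lambda>\<gamma>. Labs (g n \<gamma>)) x - fibre_norm G r s (\<lambda>\<gamma>. Labs (f \<gamma>)) x\<bar> \<le> \<delta> n"
    by eventually_elim (simp add: \<delta>_def fibre_norm_Cc_diff_le[OF assms(1,3) f g])
  have "continuous_map (subtopology TG G0) euclidean (fibre_norm G r s (\<lambda>\<gamma>. Labs (g n \<gamma>)))" for n
    using Cc_fibre_norm(1)[OF assms(1,3) g] by (rule continuous_map_from_subtopology)
  then have "continuous_map (subtopology TG G0) euclidean (fibre_norm G r s (\<lambda>\<gamma>. Labs (f \<gamma>)))"
    using bound \<delta> by (rule continuous_map_real_uniform_limit)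
  then show ?thesis
    unfolding fibre_norm_def fibre_sq_sum_def .
qed

end
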